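(* Let $d,r\ge2$. The map $\mathbb M_{d,r}\to\mathcal M_{d,r}$ sending $(\mathbf u,\mathbf w)$ to the element whose $i$-th chart representative is $\varphi_i(\mathbf u,\mathbf w)$ is well defined and bijective (each $\varphi_i$ is a bijection $\mathbb M_{d,r}\to M^{(i)}_{d,r}$ and $\mu_{i,i+1}\circ\varphi_i=\varphi_{i+1}$). Under this identification, $(\mathbf a,\mathbf b)\mapsto f_{\mathbf a,\mathbf b}$ is a bijection from $T_{d,r}$ onto $\mathrm{Sp}(\mathcal M_{d,r})$, restricting for each $i\in[r]$ to a bijection from $T_{d,r}(i)$ onto $\mathrm{Sp}(\mathcal M_{d,r},i)$. In particular $\mathcal M_{d,r}$ is full.
   Context: A polyptych lattice over $\mathbb Z$: lattices $\{M_\alpha\}_{\alpha\in I}$ of rank $n$ with piecewise linear maps (continuous, linear on the cones of a complete rational fan) $\mu_{\alpha,\beta}$, $\mu_{\alpha,\alpha}=\mathrm{id}$, $\mu_{\alpha,\beta}=\mu_{\beta,\alpha}^{-1}$, $\mu_{\beta,\gamma}\mu_{\alpha,\beta}=\mu_{\alpha,\gamma}$; elements are classes of $\bigsqcup M_\alpha$ under $m\sim\mu_{\alpha,\beta}(m)$, with chart maps $\pi_\alpha$; $m+_\alpha m'=\pi_\alpha^{-1}(\pi_\alpha m+\pi_\alpha m')$; $\lambda m=\pi_\alpha^{-1}(\lambda\pi_\alpha m)$. A point is $p:\mathcal M\to\mathbb Z$ with $p(m)+p(m')=\min_\alpha p(m+_\alpha m')$ and $p(\lambda m)=\lambda p(m)$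 ($\lambda\in\mathbb Z_{\ge0}$); $\mathrm{Sp}(\mathcal M)$ is the set of points, $\mathrm{Sp}(\mathcal M,\alpha)$ those with $p\circ\pi_\alpha^{-1}$ linear; $\mathcal M$ is full if $\mathrm{Sp}(\mathcal M)=\bigcup_\alpha\mathrm{Sp}(\mathcal M,\alpha)$. The polyptych lattice $\mathcal M_{d,r}$ (rank $d+r-1$): coordinates $(\mathbf u,\mathbf w)\in\mathbb Z^d\times\mathbb Z^r$; charts $M^{(i)}_{d,r}=\{(\mathbf u,\mathbf w):w_i=0\}$ for $i\in[r]$; mutations $\mu_{i,i+1}(\mathbf u,\mathbf w)=(\mathbf u,w_1,\dots,w_{i-1},\min\{u_1,\dots,u_d\}-\sum_kw_k,0,w_{i+2},\dots,w_r)$ for $i\in[r-1]$, with all other $\mu_{i,j}$ obtained by composition and inversion. Let $\mathbf 1=(1,\dots,1)\in\mathbb Z^d$, $\langle\cdot,\cdot\rangle$ the standard pairing, $\varepsilon_i$ standard basis vectors. $\mathbb M_{d,r}=\{(\mathbf u,\mathbf w)\in\mathbb Z^d\times\mathbb Z^r:\min_ju_j=0\}$. $\varphi_i:\mathbb M_{d,r}\to M^{(i)}_{d,r}$, $\varphi_i(\mathbf u,\mathbf w)=\pi_i(\mathbf u+\langle\mathbf 1,\mathbf w\rangle\mathbf 1,\mathbf w)$ where $\pi_i$ sets the $i$-th $\mathbf w$-coordinate to $0$ (its inverse is $(\mathbf u,\mathbf w)\mapsto(\mathbf u-\min(\mathbf u)\mathbf 1,\mathbf w+(\min(\mathbf u)-\langle\mathbf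 1,\mathbf w\rangle)\varepsilon_i)$). $T_{d,r}=\{(\mathbf a,\mathbf b)\in\mathbb Z^d\times\mathbb Z^r:a_1+\cdots+a_d=\min\{b_1,\dots,b_r\}\}$, $T_{d,r}(i)=\{(\mathbf a,\mathbf b)\in T_{d,r}:a_1+\cdots+a_d=b_i\}$. For $(\mathbf a,\mathbf b)\in T_{d,r}$, $f_{\mathbf a,\mathbf b}:\mathbb M_{d,r}\to\mathbb Z$, $f_{\mathbf a,\mathbf b}(\mathbf u,\mathbf w)=\langle\mathbf a,\mathbf u\rangle+\langle\mathbf b,\mathbf w\rangle$. *)

theory Defs
  imports "HOL-Library.FuncSet"
begin

(* Vectors u in Z^d and w in Z^r are int lists of length d resp. r.
   Indices are 0-based: the chart index i in [r] of the paper is i < r here,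
   and w_i of the paper is w ! i (with the shift i -> i-1). *)

type_synonym pt = "int list \<times> int list"

definition vadd :: "pt \<Rightarrow> pt \<Rightarrow> pt" where
  "vadd m m' = (map2 (+) (fst m) (fst m'), map2 (+) (snd m) (snd m'))"

definition vscale :: "int \<Rightarrow> pt \<Rightarrow> pt" where
  "vscale l m = (map ((*) l) (fst m), map ((*) l) (snd m))"

definition chart :: "nat \<Rightarrow> nat \<Rightarrow> nat \<Rightarrow> pt set" where
  "chart d r i = {(u, w). length u = d \<and> length w = r \<and> w ! i = 0}"

definition mu :: "nat \<Rightarrow> pt \<Rightarrow> pt" where
  "mu i m = (case m of (u, w) \<Rightarrow> (u, w[i := Min (set u) - sum_list w, Suc i := 0]))"

definition DU :: "nat \<Rightarrow> nat \<Rightarrow> (nat \<times> pt) set" where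
  "DU d r = {(i, m). i < r \<and> m \<in> chart d r i}"

text \<open>Generating identifications m ~ mu_{i,i+1}(m); all other mu_{i,j} are
  compositions/inverses of these, so the identification relation is the
  equivalence relation generated by them.\<close>
definition mstep :: "nat \<Rightarrow> nat \<Rightarrow> nat \<times> pt \<Rightarrow> nat \<times> pt \<Rightarrow> bool" where
  "mstep d r x y \<longleftrightarrow> Suc (fst x) < r \<and> snd x \<in> chart d r (fst x)
      \<and> fst y = Suc (fst x) \<and> snd y = mu (fst x) (snd x)"

definition mrel :: "nat \<Rightarrow> nat \<Rightarrow> ((nat \<times> pt) \<times> (nat \<times> pt)) set" where
  "mrel d r = {(x, y). x \<in> DU d r \<and> y \<in> DU d r \<and> (sup (mstep d r) (mstep d r)\<inverse>\<inverse>)\<^sup>*\<^sup>* x y}"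

definition PL :: "nat \<Rightarrow> nat \<Rightarrow> (nat \<times> pt) set set" where
  "PL d r = DU d r // mrel d r"

definition chartmap :: "nat \<Rightarrow> (nat \<times> pt) set \<Rightarrow> pt" where
  "chartmap i X = (THE m. (i, m) \<in> X)"

definition chartinv :: "nat \<Rightarrow> nat \<Rightarrow> nat \<Rightarrow> pt \<Rightarrow> (nat \<times> pt) set" where
  "chartinv d r i m = mrel d r `` {(i, m)}"

definition padd :: "nat \<Rightarrow> nat \<Rightarrow> nat \<Rightarrow> (nat \<times> pt) set \<Rightarrow> (nat \<times> pt) set \<Rightarrow> (nat \<times> pt) set" where
  "padd d r i X Y = chartinv d r i (vadd (chartmap i X) (chartmap i Y))"

definition psmul :: "nat \<Rightarrow> nat \<Rightarrow> nat \<Rightarrow> int \<Rightarrow> (nat \<times> pt) set \<Rightarrow> (nat \<times> pt) set" where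
  "psmul d r i l X = chartinv d r i (vscale l (chartmap i X))"

definition Sp :: "nat \<Rightarrow> nat \<Rightarrow> ((nat \<times> pt) set \<Rightarrow> int) set" where
  "Sp d r = {p \<in> extensional (PL d r).
      (\<forall>X\<in>PL d r. \<forall>Y\<in>PL d r. p X + p Y = Min {p (padd d r i X Y) | i. i < r}) \<and>
      (\<forall>X\<in>PL d r. \<forall>l::int. l \<ge> 0 \<longrightarrow> (\<forall>i<r. p (psmul d r i l X) = l * p X))}"

text \<open>Points that are linear in chart i, i.e. p o pi_i^{-1} is additive (hence Z-linear)
  on the lattice M^(i).\<close>
definition Sp_chart :: "nat \<Rightarrow> nat \<Rightarrow> nat \<Rightarrow> ((nat \<times> pt) set \<Rightarrow> int) set" where
  "Sp_chart d r i = {p \<in> Sp d r. \<forall>m\<in>chart d r i. \<forall>m'\<in>chart d r i.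
      p (chartinv d r i (vadd m m')) = p (chartinv d r i m) + p (chartinv d r i m')}"

definition full :: "nat \<Rightarrow> nat \<Rightarrow> bool" where
  "full d r \<longleftrightarrow> Sp d r = (\<Union>i<r. Sp_chart d r i)"

definition MM :: "nat \<Rightarrow> nat \<Rightarrow> pt set" where
  "MM d r = {(u, w). length u = d \<and> length w = r \<and> Min (set u) = 0}"

definition phi :: "nat \<Rightarrow> pt \<Rightarrow> pt" where
  "phi i m = (case m of (u, w) \<Rightarrow> (map (\<lambda>x. x + sum_list w) u, w[i := 0]))"

definition Phi :: "nat \<Rightarrow> nat \<Rightarrow> pt \<Rightarrow> (nat \<times> pt) set" where
  "Phi d r m = chartinv d r 0 (phi 0 m)"

definition T :: "nat \<Rightarrow> nat \<Rightarrow> pt set" where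
  "T d r = {(a, b). length a = d \<and> length b = r \<and> sum_list a = Min (set b)}"

definition T_i :: "nat \<Rightarrow> nat \<Rightarrow> nat \<Rightarrow> pt set" where
  "T_i d r i = {(a, b). (a, b) \<in> T d r \<and> sum_list a = b ! i}"

definition fab :: "int list \<Rightarrow> int list \<Rightarrow> pt \<Rightarrow> int" where
  "fab a b m = sum_list (map2 (*) a (fst m)) + sum_list (map2 (*) b (snd m))"

definition pull :: "nat \<Rightarrow> nat \<Rightarrow> ((nat \<times> pt) set \<Rightarrow> int) \<Rightarrow> (pt \<Rightarrow> int)" where
  "pull d r p = restrict (p \<circ> Phi d r) (MM d r)"

end

theory Submission
  imports Defs
begin

text \<open>Since \<open>\<mu>\<^sub>i\<^sub>,\<^sub>i\<^sub>+\<^sub>1 \<circ> \<phi>\<^sub>i = \<phi>\<^sub>i\<^sub>+\<^sub>1\<close> and every \<open>\<phi>\<^sub>i\<close> is a bijection \<open>\<bbbM>\<^sub>d\<^sub>,\<^sub>r \<rightarrow> M\<^sup>(\<^sup>i\<^sup>)\<close>, the class of \<open>(i, \<phi>\<^sub>i x)\<close> is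
  exactly \<open>{(j, \<phi>\<^sub>j x) | j}\<close>, so \<open>\<M>\<^sub>d\<^sub>,\<^sub>r \<cong> \<bbbM>\<^sub>d\<^sub>,\<^sub>r\<close>. Read in \<open>\<bbbM>\<^sub>d\<^sub>,\<^sub>r\<close>, addition in chart \<open>i\<close> is
  \<open>x + y\<close> followed by moving \<open>min (u + u')\<close> into \<open>w\<^sub>i\<close> (the map \<open>renorm i\<close>), so a point is a function
  \<open>g\<close> with \<open>g x + g y = min\<^sub>i g (renorm i (x + y))\<close>. Such a \<open>g\<close> is additive on pairs sharing a zero
  \<open>u\<close>-coordinate; peeling off unit vectors then forces \<open>g = f\<^sub>a\<^sub>,\<^sub>b\<close> with \<open>a, b\<close> its values on unit
  vectors, and testing on \<open>(\<epsilon>\<^sub>1, 0) + (\<one> - \<epsilon>\<^sub>1, 0)\<close> forces \<open>\<Sum>a = min b\<close>. Conversely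
  \<open>f\<^sub>a\<^sub>,\<^sub>b (renorm i (x + y)) = f\<^sub>a\<^sub>,\<^sub>b x + f\<^sub>a\<^sub>,\<^sub>b y + min (u + u') (b\<^sub>i - \<Sum>a)\<close>: the correction is
  nonnegative on \<open>T\<^sub>d\<^sub>,\<^sub>r\<close> and vanishes for all \<open>x, y\<close> iff \<open>b\<^sub>i = \<Sum>a\<close>. So \<open>f\<^sub>a\<^sub>,\<^sub>b\<close> is a point,
  linear in chart \<open>i\<close> iff \<open>b\<^sub>i = min b\<close>, and fullness holds because the minimum of \<open>b\<close> is attained.\<close>

lemma sum_list_list_update:
  "i < length w \<Longrightarrow> sum_list (w[i := v]) = sum_list w - w ! i + (v :: 'a :: ab_group_add)"
  by (induction w arbitrary: i) (auto split: nat.split)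

lemma sum_list_map2_plus:
  "length v = length w \<Longrightarrow> sum_list (map2 (+) v w) = sum_list v + sum_list (w :: 'a :: comm_monoid_add list)"
  by (induction v w rule: list_induct2) (auto simp: algebra_simps)

lemma sum_list_map2_times_list_update:
  "length a = length w \<Longrightarrow> i < length w \<Longrightarrow>
   sum_list (map2 (*) a (w[i := v])) = sum_list (map2 (*) a w) + a ! i * (v - w ! i :: 'a :: comm_ring)"
  by (induction a w arbitrary: i rule: list_induct2) (auto split: nat.split simp: algebra_simps)

lemma sum_list_map2_times_map_minus:
  "length a = length u \<Longrightarrow>
   sum_list (map2 (*) a (map (\<lambda>t. t - c) u)) = sum_list (map2 (*) a u) - c * sum_list (a :: 'a :: comm_ring list)"
  by (induction a u rule: list_induct2) (auto simp: algebra_simps)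

lemma sum_list_map2_times_map2_plus:
  "length a = length u \<Longrightarrow> length u = length v \<Longrightarrow>
   sum_list (map2 (*) a (map2 (+) u v)) = sum_list (map2 (*) a u) + sum_list (map2 (*) (a :: 'a :: comm_semiring_0 list) v)"
  by (induction a u v rule: list_induct3) (auto simp: algebra_simps)

lemma sum_list_map2_times_map_times:
  "length a = length u \<Longrightarrow>
   sum_list (map2 (*) a (map ((*) l) u)) = l * sum_list (map2 (*) (a :: 'a :: comm_semiring_0 list) u)"
  by (induction a u rule: list_induct2) (auto simp: algebra_simps)

lemma sum_list_map2_times_replicate:
  "length a = n \<Longrightarrow> sum_list (map2 (*) a (replicate n c)) = c * sum_list (a :: 'a :: comm_semiring_0 list)"
  by (induction a arbitrary: n) (auto simp: algebra_simps)

lemma Min_set_map_plus: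
  "u \<noteq> [] \<Longrightarrow> Min ((\<lambda>t. t + s) ` set u) = Min (set u) + (s :: 'a :: linordered_ab_group_add)"
  using Min_add_commute[of "set u" id s] by simp

lemma Min_set_map_minus:
  "u \<noteq> [] \<Longrightarrow> Min ((\<lambda>t. t - s) ` set u) = Min (set u) - (s :: 'a :: linordered_ab_group_add)"
  using Min_set_map_plus[of u "- s"] by simp

lemma Min_set_map_times:
  "u \<noteq> [] \<Longrightarrow> 0 \<le> l \<Longrightarrow> Min ((*) l ` set u) = l * Min (set (u :: 'a :: linordered_semiring list))"
  using mono_Min_commute[of "(*) l" "set u"] by (simp add: mono_def mult_left_mono)

lemma Min_set_eq_0I:
  "(\<And>t. t \<in> set v \<Longrightarrow> (0 :: 'a :: {linorder, zero}) \<le> t) \<Longrightarrow> 0 \<in> set v \<Longrightarrow> Min (set v) = 0"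
  by (simp add: Min_eqI)

lemma Min_set_in_nth:
  "v \<noteq> [] \<Longrightarrow> \<exists>i < length v. v ! i = Min (set (v :: 'a :: linorder list))"
  by (metis List.finite_set Min_in in_set_conv_nth set_empty)

lemma mem_MM_iff: "(u, w) \<in> MM d r \<longleftrightarrow> length u = d \<and> length w = r \<and> Min (set u) = 0"
  by (simp add: MM_def)

lemma mem_chart_iff: "(u, w) \<in> chart d r i \<longleftrightarrow> length u = d \<and> length w = r \<and> w ! i = 0"
  by (simp add: chart_def)

lemma MM_nonneg: "(u, w) \<in> MM d r \<Longrightarrow> t \<in> set u \<Longrightarrow> 0 \<le> t"
  by (metis List.finite_set Min_le mem_MM_iff)

definition phi_inv :: "nat \<Rightarrow> pt \<Rightarrow> pt" where
  "phi_inv i m = (case m of (u, w) \<Rightarrow> (map (\<lambda>t. t - Min (set u)) u, w[i := Min (set u) - sum_list w]))"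

definition renorm :: "nat \<Rightarrow> pt \<Rightarrow> pt" where
  "renorm i m = (case m of (u, w) \<Rightarrow> (map (\<lambda>t. t - Min (set u)) u, w[i := w ! i + Min (set u)]))"

lemma phi_inv_phi_eq_renorm:
  "i < length w \<Longrightarrow> u \<noteq> [] \<Longrightarrow> phi_inv i (phi i (u, w)) = renorm i (u, w)"
  by (simp add: phi_inv_def phi_def renorm_def Min_set_map_plus sum_list_list_update comp_def add.commute)

lemma renorm_MM: "z \<in> MM d r \<Longrightarrow> renorm i z = z"
  by (cases z) (simp add: renorm_def mem_MM_iff map_idI)

lemma renorm_in_MM:
  "length (fst z) = d \<Longrightarrow> length (snd z) = r \<Longrightarrow> 0 < d \<Longrightarrow> renorm i z \<in> MM d r"
  by (cases z) (auto simp: renorm_def mem_MM_iff Min_set_map_minus)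

lemma phi_in_chart: "x \<in> MM d r \<Longrightarrow> i < r \<Longrightarrow> phi i x \<in> chart d r i"
  by (cases x) (auto simp: phi_def mem_chart_iff mem_MM_iff)

lemma phi_inv_in_MM: "m \<in> chart d r i \<Longrightarrow> 0 < d \<Longrightarrow> phi_inv i m \<in> MM d r"
  by (cases m) (auto simp: phi_inv_def mem_chart_iff mem_MM_iff Min_set_map_minus)

lemma phi_phi_inv: "m \<in> chart d r i \<Longrightarrow> i < r \<Longrightarrow> 0 < d \<Longrightarrow> phi i (phi_inv i m) = m"
  by (cases m) (auto simp: phi_inv_def phi_def mem_chart_iff Min_set_map_minus
      sum_list_list_update comp_def map_idI; metis list_update_id)

lemma phi_inv_phi: "x \<in> MM d r \<Longrightarrow> i < r \<Longrightarrow> 0 < d \<Longrightarrow> phi_inv i (phi i x) = x"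
  by (cases x) (auto simp: mem_MM_iff phi_inv_phi_eq_renorm renorm_MM)

lemma bij_betw_phi: "i < r \<Longrightarrow> 0 < d \<Longrightarrow> bij_betw (phi i) (MM d r) (chart d r i)"
  by (rule bij_betw_byWitness[where f' = "phi_inv i"])
    (auto simp: phi_inv_phi phi_phi_inv phi_in_chart phi_inv_in_MM)

lemma mu_phi: "x \<in> MM d r \<Longrightarrow> Suc i < r \<Longrightarrow> 0 < d \<Longrightarrow> mu i (phi i x) = phi (Suc i) x"
  by (cases x) (auto simp: mu_def phi_def mem_MM_iff Min_set_map_plus sum_list_list_update)

lemma inj_on_mu: "Suc i < r \<Longrightarrow> 0 < d \<Longrightarrow> inj_on (mu i) (chart d r i)"
proof (rule inj_onI)
  fix m m' assume "Suc i < r" "0 < d" "m \<in> chart d r i" "m' \<in> chart d r i" "mu i m = mu i m'"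
  then have "phi (Suc i) (phi_inv i m) = phi (Suc i) (phi_inv i m')"
    by (metis mu_phi phi_inv_in_MM phi_phi_inv Suc_lessD)
  then have "phi_inv i m = phi_inv i m'"
    by (metis \<open>Suc i < r\<close> \<open>0 < d\<close> \<open>m \<in> _\<close> \<open>m' \<in> _\<close> phi_inv_in_MM phi_inv_phi)
  then show "m = m'"
    by (metis \<open>Suc i < r\<close> \<open>0 < d\<close> \<open>m \<in> _\<close> \<open>m' \<in> _\<close> phi_phi_inv Suc_lessD)
qed

lemma length_vadd:
  "x \<in> MM d r \<Longrightarrow> y \<in> MM d r \<Longrightarrow> length (fst (vadd x y)) = d \<and> length (snd (vadd x y)) = r"
  by (cases x; cases y) (simp add: vadd_def mem_MM_iff)

lemma vadd_MM_nonneg: "x \<in> MM d r \<Longrightarrow> y \<in> MM d r \<Longrightarrow> t \<in> set (fst (vadd x y)) \<Longrightarrow> 0 \<le> t"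
  by (cases x; cases y) (force simp: vadd_def dest: set_zip_leftD set_zip_rightD MM_nonneg)

lemma Min_vadd_MM_nonneg: "x \<in> MM d r \<Longrightarrow> y \<in> MM d r \<Longrightarrow> 0 < d \<Longrightarrow> 0 \<le> Min (set (fst (vadd x y)))"
  using length_vadd[of x d r y] vadd_MM_nonneg[of x d r y] by (auto simp: Min_ge_iff)

lemma vadd_in_MM_common_zero:
  assumes "x \<in> MM d r" "y \<in> MM d r" "j < d" "fst x ! j = 0" "fst y ! j = 0"
  shows "vadd x y \<in> MM d r"
proof -
  have "fst (vadd x y) ! j = 0"
    using assms length_vadd[OF assms(1,2)] by (cases x; cases y) (simp add: vadd_def mem_MM_iff)
  then have "0 \<in> set (fst (vadd x y))"
    using assms(3) length_vadd[OF assms(1,2)] by (metis nth_mem)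
  then have "Min (set (fst (vadd x y))) = 0"
    using vadd_MM_nonneg[OF assms(1,2)] by (rule Min_set_eq_0I[rotated])
  then show ?thesis
    using length_vadd[OF assms(1,2)] by (cases "vadd x y") (simp add: mem_MM_iff)
qed

lemma vscale_in_MM: "x \<in> MM d r \<Longrightarrow> 0 \<le> l \<Longrightarrow> 0 < d \<Longrightarrow> vscale l x \<in> MM d r"
  by (cases x) (auto simp: vscale_def mem_MM_iff Min_set_map_times)

lemma vadd_phi: "x \<in> MM d r \<Longrightarrow> y \<in> MM d r \<Longrightarrow> i < r \<Longrightarrow> vadd (phi i x) (phi i y) = phi i (vadd x y)"
  by (cases x; cases y)
    (auto intro!: nth_equalityI simp: vadd_def phi_def mem_MM_iff sum_list_map2_plus nth_list_update)

lemma vscale_phi: "vscale l (phi i x) = phi i (vscale l x)"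
  by (cases x) (simp add: vscale_def phi_def sum_list_const_mult map_update algebra_simps comp_def)

text \<open>The conditions defining \<open>Sp\<close> and \<open>Sp_chart\<close>, transported to functions on \<open>\<bbbM>\<^sub>d\<^sub>,\<^sub>r\<close>
  (see \<open>Sp_imp_is_point_MM\<close> and \<open>Sp_chart_iff\<close>).\<close>
definition is_point_MM :: "nat \<Rightarrow> nat \<Rightarrow> (pt \<Rightarrow> int) \<Rightarrow> bool" where
  "is_point_MM d r g \<longleftrightarrow>
     (\<forall>x\<in>MM d r. \<forall>y\<in>MM d r. g x + g y = Min {g (renorm i (vadd x y)) | i. i < r})"

definition linear_in_chart :: "nat \<Rightarrow> nat \<Rightarrow> nat \<Rightarrow> (pt \<Rightarrow> int) \<Rightarrow> bool" where
  "linear_in_chart d r i g \<longleftrightarrow> (\<forall>x\<in>MM d r. \<forall>y\<in>MM d r. g (renorm i (vadd x y)) = g x + g y)"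

definition unit_vec :: "nat \<Rightarrow> nat \<Rightarrow> int list" where
  "unit_vec n k = (replicate n 0)[k := 1]"

lemma unit_vec_in_MM: "k < d \<Longrightarrow> 2 \<le> d \<Longrightarrow> length w = r \<Longrightarrow> (unit_vec d k, w) \<in> MM d r"
proof -
  assume "k < d" "2 \<le> d" "length w = r"
  moreover have "0 \<in> set (unit_vec d k)"
    using \<open>k < d\<close> \<open>2 \<le> d\<close> unfolding in_set_conv_nth
    by (intro exI[of _ "if k = 0 then 1 else 0"]) (auto simp: unit_vec_def)
  moreover have "0 \<le> t" if "t \<in> set (unit_vec d k)" for t
    using that set_update_subset_insert[of "replicate d 0" k 1] by (auto simp: unit_vec_def)
  ultimately show ?thesis
    by (auto simp: mem_MM_iff unit_vec_def intro!: Min_set_eq_0I)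
qed

lemma fab_unit_vec_u:
  "length a = d \<Longrightarrow> length b = r \<Longrightarrow> k < d \<Longrightarrow> fab a b (unit_vec d k, replicate r 0) = a ! k"
  by (simp add: fab_def unit_vec_def sum_list_map2_times_list_update sum_list_map2_times_replicate)

lemma fab_unit_vec_w:
  "length a = d \<Longrightarrow> length b = r \<Longrightarrow> k < r \<Longrightarrow> fab a b (replicate d 0, (replicate r 0)[k := s]) = s * b ! k"
  by (simp add: fab_def sum_list_map2_times_list_update sum_list_map2_times_replicate)

lemma fab_vadd:
  "x \<in> MM d r \<Longrightarrow> y \<in> MM d r \<Longrightarrow> length a = d \<Longrightarrow> length b = r \<Longrightarrow>
   fab a b (vadd x y) = fab a b x + fab a b y"
  by (cases x; cases y) (simp add: fab_def vadd_def mem_MM_iff sum_list_map2_times_map2_plus)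

lemma fab_vscale:
  "x \<in> MM d r \<Longrightarrow> length a = d \<Longrightarrow> length b = r \<Longrightarrow> fab a b (vscale l x) = l * fab a b x"
  by (cases x) (simp add: fab_def vscale_def mem_MM_iff sum_list_map2_times_map_times algebra_simps)

lemma fab_renorm:
  "length (fst z) = length a \<Longrightarrow> length (snd z) = length b \<Longrightarrow> i < length b \<Longrightarrow>
   fab a b (renorm i z) = fab a b z + Min (set (fst z)) * (b ! i - sum_list a)"
  by (cases z) (simp add: fab_def renorm_def sum_list_map2_times_map_minus
      sum_list_map2_times_list_update algebra_simps)

lemma fab_renorm_vadd:
  "x \<in> MM d r \<Longrightarrow> y \<in> MM d r \<Longrightarrow> length a = d \<Longrightarrow> length b = r \<Longrightarrow> i < r \<Longrightarrow>
   fab a b (renorm i (vadd x y)) = fab a b x + fab a b y + Min (set (fst (vadd x y))) * (b ! i - sum_list a)"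
  using fab_renorm[of "vadd x y" a b i] length_vadd[of x d r y] fab_vadd[of x d r y a b] by simp

lemma is_point_MM_fab:
  assumes ab: "(a, b) \<in> T d r" and "0 < r" "0 < d"
  shows "is_point_MM d r (fab a b)"
  unfolding is_point_MM_def
proof (intro ballI Min_eqI[symmetric])
  fix x y assume xy: "x \<in> MM d r" "y \<in> MM d r"
  have la: "length a = d" "length b = r" "sum_list a = Min (set b)"
    using ab by (auto simp: T_def)
  have "{fab a b (renorm i (vadd x y)) | i. i < r} = (\<lambda>i. fab a b (renorm i (vadd x y))) ` {..<r}"
    by auto
  then show "finite {fab a b (renorm i (vadd x y)) | i. i < r}"
    by simp
  show "fab a b x + fab a b y \<le> z" if "z \<in> {fab a b (renorm i (vadd x y)) | i. i < r}" for z
    using that fab_renorm_vadd[OF xy la(1,2)] Min_vadd_MM_nonneg[OF xy \<open>0 < d\<close>] la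
    by (fastforce intro!: mult_nonneg_nonneg)
  obtain i where "i < r" "b ! i = Min (set b)"
    using Min_set_in_nth[of b] la \<open>0 < r\<close> by auto
  then show "fab a b x + fab a b y \<in> {fab a b (renorm i (vadd x y)) | i. i < r}"
    using fab_renorm_vadd[OF xy la(1,2)] la by force
qed

lemma ones_split_MM:
  assumes "2 \<le> d"
  shows "(unit_vec d 0, replicate r 0) \<in> MM d r" "((replicate d 1)[0 := 0], replicate r 0) \<in> MM d r"
    and "vadd (unit_vec d 0, replicate r 0) ((replicate d 1)[0 := 0], replicate r 0) = (replicate d 1, replicate r 0)"
proof -
  show "(unit_vec d 0, replicate r 0) \<in> MM d r"
    using unit_vec_in_MM assms by simp
  have "0 \<in> set ((replicate d (1::int))[0 := 0])"
    using assms by (intro set_update_memI) simp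
  moreover have "0 \<le> t" if "t \<in> set ((replicate d (1::int))[0 := 0])" for t
    using that set_update_subset_insert[of "replicate d (1::int)" 0 0] by auto
  ultimately show "((replicate d 1)[0 := 0], replicate r 0) \<in> MM d r"
    by (simp add: mem_MM_iff Min_set_eq_0I)
  show "vadd (unit_vec d 0, replicate r 0) ((replicate d 1)[0 := 0], replicate r 0) = (replicate d 1, replicate r 0)"
    using assms by (auto simp: unit_vec_def vadd_def zip_replicate intro!: nth_equalityI simp: nth_list_update)
qed

lemma linear_in_chart_fab_iff:
  assumes ab: "(a, b) \<in> T d r" and "i < r" "2 \<le> d"
  shows "linear_in_chart d r i (fab a b) \<longleftrightarrow> b ! i = sum_list a"
proof
  have la: "length a = d" "length b = r"
    using ab by (auto simp: T_def)
  note xy = ones_split_MM[OF \<open>2 \<le> d\<close>, of r]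
  assume "linear_in_chart d r i (fab a b)"
  then have "fab a b (renorm i (vadd (unit_vec d 0, replicate r 0) ((replicate d 1)[0 := 0], replicate r 0)))
      = fab a b (unit_vec d 0, replicate r 0) + fab a b ((replicate d 1)[0 := 0], replicate r 0)"
    using xy(1,2) unfolding linear_in_chart_def by blast
  then show "b ! i = sum_list a"
    using fab_renorm_vadd[OF xy(1,2) la \<open>i < r\<close>] xy(3) \<open>2 \<le> d\<close> by simp
qed (use fab_renorm_vadd[of _ d r _ a b i] ab \<open>i < r\<close> in \<open>simp add: linear_in_chart_def T_def\<close>)

lemma fab_eq_on_MM_imp_eq:
  assumes "(a, b) \<in> T d r" "(a', b') \<in> T d r" "2 \<le> d" and eq: "\<And>x. x \<in> MM d r \<Longrightarrow> fab a b x = fab a' b' x"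
  shows "(a, b) = (a', b')"
proof -
  have la: "length a = d" "length b = r" "length a' = d" "length b' = r"
    using assms by (auto simp: T_def)
  have "a ! k = a' ! k" if "k < d" for k
    using eq[OF unit_vec_in_MM[OF that \<open>2 \<le> d\<close>, of "replicate r 0"]]
      fab_unit_vec_u[OF la(1,2) that] fab_unit_vec_u[OF la(3,4) that] by simp
  moreover have "b ! k = b' ! k" if "k < r" for k
    using eq[of "(replicate d 0, (replicate r 0)[k := 1])"] \<open>2 \<le> d\<close>
      fab_unit_vec_w[OF la(1,2) that] fab_unit_vec_w[OF la(3,4) that] by (simp add: mem_MM_iff)
  ultimately show ?thesis
    using la by (simp add: nth_equalityI)
qed

definition unit_steps :: "nat \<Rightarrow> nat \<Rightarrow> pt set" where
  "unit_steps d r = {(unit_vec d k, replicate r 0) | k. k < d}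
     \<union> {(replicate d 0, (replicate r 0)[k := s]) | k s. k < r \<and> (s = 1 \<or> s = -1)}"

definition l1_norm :: "pt \<Rightarrow> nat" where
  "l1_norm x = nat (sum_list (map abs (fst x)) + sum_list (map abs (snd x)))"

lemma unit_steps_subset_MM: "2 \<le> d \<Longrightarrow> unit_steps d r \<subseteq> MM d r"
  by (auto simp: unit_steps_def unit_vec_in_MM) (simp_all add: mem_MM_iff)

lemma sum_list_abs_nonneg: "0 \<le> sum_list (map abs (xs :: 'a :: ordered_ab_group_add_abs list))"
  by (induction xs) auto

lemma l1_norm_update_fst:
  "k < length u \<Longrightarrow> \<bar>v\<bar> < \<bar>u ! k\<bar> \<Longrightarrow> l1_norm (u[k := v], w) < l1_norm (u, w)"
  using sum_list_abs_nonneg[of "u[k := v]"] sum_list_abs_nonneg[of w]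
  by (simp add: l1_norm_def map_update sum_list_list_update)

lemma l1_norm_update_snd:
  "k < length w \<Longrightarrow> \<bar>v\<bar> < \<bar>w ! k\<bar> \<Longrightarrow> l1_norm (u, w[k := v]) < l1_norm (u, w)"
  using sum_list_abs_nonneg[of u] sum_list_abs_nonneg[of "w[k := v]"]
  by (simp add: l1_norm_def map_update sum_list_list_update)

lemma decompose_MM:
  assumes x: "x \<in> MM d r" "x \<noteq> (replicate d 0, replicate r 0)" and "0 < d"
  obtains x' e j where "x' \<in> MM d r" "e \<in> unit_steps d r" "j < d" "fst x' ! j = 0" "fst e ! j = 0"
    "vadd x' e = x" "l1_norm x' < l1_norm x"
proof -
  obtain u w where uw: "x = (u, w)"
    by fastforce
  have lu: "length u = d" and lw: "length w = r" and u_nonneg: "\<And>k. k < d \<Longrightarrow> 0 \<le> u ! k"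
    using x uw MM_nonneg[of u w d r] by (auto simp: mem_MM_iff)
  obtain j where j: "j < d" "u ! j = 0"
    using Min_set_in_nth[of u] x uw lu \<open>0 < d\<close> by (auto simp: mem_MM_iff)
  show thesis
  proof (cases "\<exists>k<d. u ! k \<noteq> 0")
    case True
    then obtain k where k: "k < d" "0 < u ! k"
      using u_nonneg by (metis less_le)
    let ?u' = "u[k := u ! k - 1]"
    have "?u' ! j = 0"
      using j k by (cases "j = k") auto
    then have "0 \<in> set ?u'"
      using j lu by (metis length_list_update nth_mem)
    moreover have "0 \<le> t" if "t \<in> set ?u'" for t
      using that u_nonneg k lu by (auto simp: in_set_conv_nth nth_list_update)
    ultimately have "(?u', w) \<in> MM d r"
      using lu lw j by (simp add: mem_MM_iff Min_set_eq_0I)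
    moreover have "vadd (?u', w) (unit_vec d k, replicate r 0) = x"
      using lu lw k by (auto simp: unit_vec_def vadd_def uw intro!: nth_equalityI simp: nth_list_update)
    moreover have "(unit_vec d k, replicate r 0) \<in> unit_steps d r" "unit_vec d k ! j = 0"
      using j k lu by (auto simp: unit_steps_def unit_vec_def nth_list_update)
    ultimately show thesis
      using that[of "(?u', w)" "(unit_vec d k, replicate r 0)" j] j \<open>?u' ! j = 0\<close> k lu uw
        l1_norm_update_fst[of k u] by simp
  next
    case False
    then have u0: "u = replicate d 0"
      using lu by (auto intro!: nth_equalityI)
    then obtain k where k: "k < r" "w ! k \<noteq> 0"
      using x uw lw by (metis (no_types, lifting) nth_equalityI length_replicate nth_replicate)
    define s where "s = sgn (w ! k)"
    have "(u, w[k := w ! k - s]) \<in> MM d r"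
      using x uw lw by (simp add: mem_MM_iff)
    moreover have "vadd (u, w[k := w ! k - s]) (replicate d 0, (replicate r 0)[k := s]) = x"
      using lu lw k u0 by (auto simp: vadd_def uw zip_replicate intro!: nth_equalityI simp: nth_list_update)
    moreover have "(replicate d 0, (replicate r 0)[k := s]) \<in> unit_steps d r"
      using k by (auto simp: unit_steps_def s_def sgn_if)
    moreover have "\<bar>w ! k - s\<bar> < \<bar>w ! k\<bar>"
      using k by (auto simp: s_def sgn_if)
    ultimately show thesis
      using that[of "(u, w[k := w ! k - s])" "(replicate d 0, (replicate r 0)[k := s])" j] j u0 k lw uw
        l1_norm_update_snd[of k w] by simp
  qed
qed

lemma additive_on_common_zero_imp_fab:
  fixes g :: "pt \<Rightarrow> int"
  assumes "2 \<le> d"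
    and add: "\<And>x y j. x \<in> MM d r \<Longrightarrow> y \<in> MM d r \<Longrightarrow> j < d \<Longrightarrow> fst x ! j = 0 \<Longrightarrow> fst y ! j = 0 \<Longrightarrow>
      g (vadd x y) = g x + g y"
  defines "a \<equiv> map (\<lambda>k. g (unit_vec d k, replicate r 0)) [0..<d]"
    and "b \<equiv> map (\<lambda>k. g (replicate d 0, (replicate r 0)[k := 1])) [0..<r]"
  assumes "x \<in> MM d r"
  shows "g x = fab a b x"
proof -
  have la: "length a = d" "length b = r"
    by (simp_all add: a_def b_def)
  let ?zero = "(replicate d 0, replicate r (0::int))"
  have zero_MM: "(replicate d 0, w) \<in> MM d r" if "length w = r" for w
    using that \<open>2 \<le> d\<close> by (simp add: mem_MM_iff)
  have "vadd ?zero ?zero = ?zero"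
    by (simp add: vadd_def zip_replicate)
  then have g_zero: "g ?zero = 0"
    using add[of ?zero ?zero 0] zero_MM[of "replicate r 0"] \<open>2 \<le> d\<close> by simp
  have g_neg: "g (replicate d 0, (replicate r 0)[k := -1]) = - (b ! k)" if "k < r" for k
  proof -
    have "vadd (replicate d 0, (replicate r 0)[k := -1]) (replicate d 0, (replicate r 0)[k := 1]) = ?zero"
      by (cases "k < r") (auto simp: vadd_def zip_replicate intro!: nth_equalityI simp: nth_list_update)
    then show ?thesis
      using add[of "(replicate d 0, (replicate r 0)[k := -1])" "(replicate d 0, (replicate r 0)[k := 1])" 0]
        zero_MM g_zero \<open>2 \<le> d\<close> that by (simp add: b_def)
  qed
  have g_steps: "g e = fab a b e" if "e \<in> unit_steps d r" for e
    using that g_neg fab_unit_vec_u[OF la] fab_unit_vec_w[OF la] by (auto simp: unit_steps_def a_def b_def)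
  show ?thesis
    using \<open>x \<in> MM d r\<close>
  proof (induction x rule: measure_induct_rule[of l1_norm])
    case (less x)
    show ?case
    proof (cases "x = ?zero")
      case True
      then show ?thesis
        using g_zero la by (simp add: fab_def sum_list_map2_times_replicate)
    next
      case False
      then obtain x' e j where x': "x' \<in> MM d r" "l1_norm x' < l1_norm x" and e: "e \<in> unit_steps d r"
        and "j < d" "fst x' ! j = 0" "fst e ! j = 0" "vadd x' e = x"
        using decompose_MM[OF less.prems False] \<open>2 \<le> d\<close> by (metis less_le_trans zero_less_numeral)
      moreover have "e \<in> MM d r"
        using e unit_steps_subset_MM[OF \<open>2 \<le> d\<close>] by blast
      ultimately show ?thesis
        using add[of x' e j] less.IH[OF x'(2,1)] g_steps[OF e] fab_vadd[of x' d r e a b] la by simp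
    qed
  qed
qed

lemma is_point_MM_imp_fab:
  assumes g: "is_point_MM d r g" and "2 \<le> d" "0 < r"
  shows "\<exists>(a, b) \<in> T d r. \<forall>x\<in>MM d r. g x = fab a b x"
proof -
  define a where "a = map (\<lambda>k. g (unit_vec d k, replicate r 0)) [0..<d]"
  define b where "b = map (\<lambda>k. g (replicate d 0, (replicate r 0)[k := 1])) [0..<r]"
  have la: "length a = d" "length b = r"
    by (simp_all add: a_def b_def)
  have "g (vadd x y) = g x + g y"
    if "x \<in> MM d r" "y \<in> MM d r" "j < d" "fst x ! j = 0" "fst y ! j = 0" for x y j
  proof -
    have xy: "vadd x y \<in> MM d r"
      using vadd_in_MM_common_zero that by blast
    then have "{g (renorm i (vadd x y)) | i. i < r} = {g (vadd x y)}"
      using renorm_MM \<open>0 < r\<close> by auto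
    then show ?thesis
      using g that(1,2) by (simp add: is_point_MM_def)
  qed
  then have g_fab: "g x = fab a b x" if "x \<in> MM d r" for x
    using additive_on_common_zero_imp_fab[OF \<open>2 \<le> d\<close>] that unfolding a_def b_def by blast
  note xy = ones_split_MM[OF \<open>2 \<le> d\<close>, of r]
  have "renorm i (replicate d 1, replicate r 0) = (replicate d 0, (replicate r 0)[i := 1])" if "i < r" for i
    using \<open>2 \<le> d\<close> that by (simp add: renorm_def)
  then have "{g (renorm i (replicate d 1, replicate r 0)) | i. i < r} = set b"
    by (force simp: b_def)
  then have "Min (set b) = g (unit_vec d 0, replicate r 0) + g ((replicate d 1)[0 := 0], replicate r 0)"
    using g xy by (simp add: is_point_MM_def)
  also have "\<dots> = sum_list a"
    using g_fab xy fab_vadd[OF xy(1,2) la] la by (simp add: fab_def sum_list_map2_times_replicate)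
  finally have "(a, b) \<in> T d r"
    using la by (simp add: T_def)
  then show ?thesis
    using g_fab by blast
qed

locale polyptych_Mdr =
  fixes d r :: nat
  assumes two_le_d: "2 \<le> d" and r_pos: "0 < r"
begin

lemma d_pos: "0 < d"
  using two_le_d by simp

definition elem :: "pt \<Rightarrow> (nat \<times> pt) set" where
  "elem x = {(i, phi i x) | i. i < r}"

lemma mrel_eq: "mrel d r = {(x, y). x \<in> DU d r \<and> y \<in> DU d r \<and> (symclp (mstep d r))\<^sup>*\<^sup>* x y}"
  by (simp add: mrel_def symclp_pointfree)

lemma elem_subset_DU: "x \<in> MM d r \<Longrightarrow> elem x \<subseteq> DU d r"
  by (auto simp: elem_def DU_def phi_in_chart)

lemma mstep_phi: "x \<in> MM d r \<Longrightarrow> Suc j < r \<Longrightarrow> mstep d r (j, phi j x) (Suc j, phi (Suc j) x)"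
  by (simp add: mstep_def phi_in_chart mu_phi d_pos)

lemma symclp_mstep_elem:
  assumes x: "x \<in> MM d r" and y: "y \<in> elem x" and step: "symclp (mstep d r) y z"
  shows "z \<in> elem x"
proof -
  obtain j where j: "j < r" "y = (j, phi j x)"
    using y by (auto simp: elem_def)
  obtain k m where z: "z = (k, m)"
    by (cases z)
  from step show ?thesis
  proof cases
    case base
    then show ?thesis
      using j x z by (auto simp: mstep_def elem_def mu_phi d_pos)
  next
    case sym
    then have "j = Suc k" "Suc k < r" "m \<in> chart d r k" "mu k m = mu k (phi k x)"
      using j z x by (auto simp: mstep_def mu_phi d_pos)
    then have "m = phi k x"
      using inj_on_mu[OF _ d_pos] phi_in_chart[OF x] by (meson Suc_lessD inj_onD)
    then show ?thesis
      using z \<open>Suc k < r\<close> by (auto simp: elem_def)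
  qed
qed

lemma mrel_Image_phi:
  assumes x: "x \<in> MM d r" and i: "i < r"
  shows "mrel d r `` {(i, phi i x)} = elem x"
proof -
  have reach_elem: "(symclp (mstep d r))\<^sup>*\<^sup>* (i, phi i x) y \<Longrightarrow> y \<in> elem x" for y
    by (induction rule: rtranclp_induct) (use i symclp_mstep_elem[OF x] in \<open>auto simp: elem_def\<close>)
  have reach_phi: "(symclp (mstep d r))\<^sup>*\<^sup>* (0, phi 0 x) (j, phi j x)" if "j < r" for j
    using that
  proof (induction j)
    case (Suc j)
    then show ?case
      using mstep_phi[OF x] by (meson Suc_lessD rtranclp.rtrancl_into_rtrancl symclpI1)
  qed simp
  have "(symclp (mstep d r))\<^sup>*\<^sup>* (i, phi i x) (j, phi j x)" if "j < r" for j
    using sympD[OF symp_rtranclp_symclp reach_phi[OF i]] reach_phi[OF that] by (rule rtranclp_trans)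
  then show ?thesis
    using reach_elem elem_subset_DU[OF x] i by (fastforce simp: mrel_eq elem_def)
qed

lemma PL_eq: "PL d r = elem ` MM d r"
  unfolding PL_def quotient_def
proof (intro equalityI subsetI)
  fix X assume "X \<in> (\<Union>y\<in>DU d r. {mrel d r `` {y}})"
  then obtain i m where i: "i < r" and m: "m \<in> chart d r i" and X: "X = mrel d r `` {(i, m)}"
    by (auto simp: DU_def)
  have "X = elem (phi_inv i m)"
    using mrel_Image_phi[OF phi_inv_in_MM[OF m d_pos] i] phi_phi_inv[OF m i d_pos] X by simp
  then show "X \<in> elem ` MM d r"
    using phi_inv_in_MM[OF m d_pos] by blast
next
  fix X assume "X \<in> elem ` MM d r"
  then obtain x where x: "x \<in> MM d r" and X: "X = elem x"
    by blast
  have "(0, phi 0 x) \<in> DU d r"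
    using elem_subset_DU[OF x] r_pos by (auto simp: elem_def)
  then show "X \<in> (\<Union>y\<in>DU d r. {mrel d r `` {y}})"
    using mrel_Image_phi[OF x r_pos] X by blast
qed

lemma Phi_eq: "x \<in> MM d r \<Longrightarrow> Phi d r x = elem x"
  by (simp add: Phi_def chartinv_def mrel_Image_phi r_pos)

lemma chartinv_phi: "x \<in> MM d r \<Longrightarrow> i < r \<Longrightarrow> chartinv d r i (phi i x) = elem x"
  by (simp add: chartinv_def mrel_Image_phi)

lemma chartinv_eq: "m \<in> chart d r i \<Longrightarrow> i < r \<Longrightarrow> chartinv d r i m = elem (phi_inv i m)"
  by (metis chartinv_phi phi_inv_in_MM phi_phi_inv d_pos)

lemma chartmap_elem: "x \<in> MM d r \<Longrightarrow> i < r \<Longrightarrow> chartmap i (elem x) = phi i x"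
  by (simp add: chartmap_def elem_def)

lemma inj_on_elem: "inj_on elem (MM d r)"
  by (rule inj_onI) (metis chartmap_elem phi_inv_phi r_pos d_pos)

lemma chartinv_vadd_phi:
  assumes "x \<in> MM d r" "y \<in> MM d r" "i < r"
  shows "chartinv d r i (vadd (phi i x) (phi i y)) = elem (renorm i (vadd x y))"
proof -
  obtain u w where uw: "vadd x y = (u, w)"
    by fastforce
  have "u \<noteq> []" "i < length w"
    using length_vadd[OF assms(1,2)] uw assms(3) d_pos by auto
  then have "phi_inv i (phi i (vadd x y)) = renorm i (vadd x y)"
    using uw phi_inv_phi_eq_renorm by simp
  moreover have "phi i (vadd x y) \<in> chart d r i"
    using length_vadd[OF assms(1,2)] uw assms(3) by (simp add: phi_def mem_chart_iff)
  ultimately show ?thesis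
    using assms by (simp add: vadd_phi chartinv_eq)
qed

lemma padd_elem:
  "x \<in> MM d r \<Longrightarrow> y \<in> MM d r \<Longrightarrow> i < r \<Longrightarrow> padd d r i (elem x) (elem y) = elem (renorm i (vadd x y))"
  by (simp add: padd_def chartmap_elem chartinv_vadd_phi)

lemma psmul_elem: "x \<in> MM d r \<Longrightarrow> i < r \<Longrightarrow> 0 \<le> l \<Longrightarrow> psmul d r i l (elem x) = elem (vscale l x)"
  by (simp add: psmul_def chartmap_elem vscale_phi chartinv_phi vscale_in_MM d_pos)

definition point_of :: "int list \<Rightarrow> int list \<Rightarrow> (nat \<times> pt) set \<Rightarrow> int" where
  "point_of a b = restrict (\<lambda>X. fab a b (inv_into (MM d r) elem X)) (PL d r)"

lemma point_of_elem: "x \<in> MM d r \<Longrightarrow> point_of a b (elem x) = fab a b x"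
  using PL_eq inj_on_elem by (simp add: point_of_def)

lemma pull_eq_fab: "(\<And>x. x \<in> MM d r \<Longrightarrow> p (elem x) = fab a b x) \<Longrightarrow> pull d r p = restrict (fab a b) (MM d r)"
  by (rule ext) (simp add: pull_def Phi_eq)

lemma pull_point_of: "pull d r (point_of a b) = restrict (fab a b) (MM d r)"
  by (rule pull_eq_fab) (rule point_of_elem)

lemma padd_elem_set:
  "x \<in> MM d r \<Longrightarrow> y \<in> MM d r \<Longrightarrow>
   {p (padd d r i (elem x) (elem y)) | i. i < r} = {p (elem (renorm i (vadd x y))) | i. i < r}"
  using padd_elem by metis

lemma renorm_vadd_in_MM: "x \<in> MM d r \<Longrightarrow> y \<in> MM d r \<Longrightarrow> renorm i (vadd x y) \<in> MM d r"
  using renorm_in_MM length_vadd d_pos by blast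

lemma point_of_in_Sp: assumes "(a, b) \<in> T d r" shows "point_of a b \<in> Sp d r"
proof -
  have la: "length a = d" "length b = r"
    using assms by (auto simp: T_def)
  have "point_of a b (elem x) + point_of a b (elem y) = Min {point_of a b (padd d r i (elem x) (elem y)) | i. i < r}"
    if "x \<in> MM d r" "y \<in> MM d r" for x y
    using is_point_MM_fab[OF assms r_pos d_pos] that
    by (simp add: padd_elem_set point_of_elem renorm_vadd_in_MM is_point_MM_def)
  moreover have "point_of a b (psmul d r i l (elem x)) = l * point_of a b (elem x)"
    if "x \<in> MM d r" "0 \<le> l" "i < r" for x l i
    using that by (simp add: psmul_elem point_of_elem vscale_in_MM d_pos fab_vscale la)
  ultimately show ?thesis
    by (auto simp: Sp_def point_of_def PL_eq)
qed

lemma Sp_imp_is_point_MM: "p \<in> Sp d r \<Longrightarrow> is_point_MM d r (\<lambda>x. p (elem x))"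
  by (simp add: Sp_def is_point_MM_def PL_eq padd_elem_set)

lemma Sp_chart_iff:
  assumes "i < r"
  shows "p \<in> Sp_chart d r i \<longleftrightarrow> p \<in> Sp d r \<and> linear_in_chart d r i (\<lambda>x. p (elem x))"
  using bij_betw_imp_surj_on[OF bij_betw_phi[OF assms d_pos], symmetric] assms
  by (simp add: Sp_chart_def linear_in_chart_def chartinv_vadd_phi chartinv_phi)

lemma linear_in_chart_cong:
  "(\<And>x. x \<in> MM d r \<Longrightarrow> g x = h x) \<Longrightarrow> linear_in_chart d r i g \<longleftrightarrow> linear_in_chart d r i h"
  by (simp add: linear_in_chart_def renorm_vadd_in_MM)

lemma Sp_imp_fab:
  assumes "p \<in> Sp d r"
  obtains a b where "(a, b) \<in> T d r" "\<And>x. x \<in> MM d r \<Longrightarrow> p (elem x) = fab a b x"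
  using is_point_MM_imp_fab[OF Sp_imp_is_point_MM[OF assms] two_le_d r_pos] by auto

lemma image_pull_Sp: "pull d r ` Sp d r = (\<lambda>(a, b). restrict (fab a b) (MM d r)) ` T d r"
proof (intro equalityI subsetI)
  fix q assume "q \<in> pull d r ` Sp d r"
  then obtain p where p: "p \<in> Sp d r" and q: "q = pull d r p"
    by blast
  obtain a b where "(a, b) \<in> T d r" "\<And>x. x \<in> MM d r \<Longrightarrow> p (elem x) = fab a b x"
    using Sp_imp_fab[OF p] by blast
  then show "q \<in> (\<lambda>(a, b). restrict (fab a b) (MM d r)) ` T d r"
    using q pull_eq_fab by force
next
  fix q assume "q \<in> (\<lambda>(a, b). restrict (fab a b) (MM d r)) ` T d r"
  then obtain a b where "(a, b) \<in> T d r" "q = restrict (fab a b) (MM d r)"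
    by auto
  then show "q \<in> pull d r ` Sp d r"
    using point_of_in_Sp pull_point_of by (metis image_eqI)
qed

lemma image_pull_Sp_chart:
  assumes "i < r"
  shows "pull d r ` Sp_chart d r i = (\<lambda>(a, b). restrict (fab a b) (MM d r)) ` T_i d r i"
proof (intro equalityI subsetI)
  fix q assume "q \<in> pull d r ` Sp_chart d r i"
  then obtain p where p: "p \<in> Sp_chart d r i" and q: "q = pull d r p"
    by blast
  obtain a b where ab: "(a, b) \<in> T d r" and p_fab: "\<And>x. x \<in> MM d r \<Longrightarrow> p (elem x) = fab a b x"
    using Sp_imp_fab p Sp_chart_iff[OF assms] by blast
  have "linear_in_chart d r i (fab a b)"
    using p Sp_chart_iff[OF assms] linear_in_chart_cong[OF p_fab] by simp
  then have "(a, b) \<in> T_i d r i"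
    using linear_in_chart_fab_iff[OF ab assms two_le_d] ab by (simp add: T_i_def)
  then show "q \<in> (\<lambda>(a, b). restrict (fab a b) (MM d r)) ` T_i d r i"
    using q pull_eq_fab[OF p_fab] by force
next
  fix q assume "q \<in> (\<lambda>(a, b). restrict (fab a b) (MM d r)) ` T_i d r i"
  then obtain a b where ab: "(a, b) \<in> T d r" "b ! i = sum_list a" and q: "q = restrict (fab a b) (MM d r)"
    by (auto simp: T_i_def)
  have "point_of a b \<in> Sp_chart d r i"
    using point_of_in_Sp[OF ab(1)] linear_in_chart_fab_iff[OF ab(1) assms two_le_d] ab(2)
      linear_in_chart_cong[OF point_of_elem] by (simp add: Sp_chart_iff[OF assms])
  then show "q \<in> pull d r ` Sp_chart d r i"
    using q pull_point_of by (metis image_eqI)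
qed

lemma full: "full d r"
proof -
  have "p \<in> (\<Union>i<r. Sp_chart d r i)" if p: "p \<in> Sp d r" for p
  proof -
    obtain a b where ab: "(a, b) \<in> T d r" and p_fab: "\<And>x. x \<in> MM d r \<Longrightarrow> p (elem x) = fab a b x"
      using Sp_imp_fab[OF p] by blast
    obtain i where i: "i < r" "b ! i = Min (set b)"
      using Min_set_in_nth[of b] ab r_pos by (auto simp: T_def)
    then have "linear_in_chart d r i (fab a b)"
      using linear_in_chart_fab_iff[OF ab i(1) two_le_d] ab by (simp add: T_def)
    then have "p \<in> Sp_chart d r i"
      using p Sp_chart_iff[OF i(1)] linear_in_chart_cong[OF p_fab] by simp
    then show ?thesis
      using i by blast
  qed
  then show ?thesis
    by (auto simp: full_def Sp_chart_def)
qed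

end

lemma T_i_subset_T: "T_i d r i \<subseteq> T d r"
  by (auto simp: T_i_def)

lemma inj_on_fab_T: "2 \<le> d \<Longrightarrow> inj_on (\<lambda>(a, b). restrict (fab a b) (MM d r)) (T d r)"
proof (rule inj_onI, clarify)
  fix a b a' b' assume "2 \<le> d" "(a, b) \<in> T d r" "(a', b') \<in> T d r"
    and "restrict (fab a b) (MM d r) = restrict (fab a' b') (MM d r)"
  then show "a = a' \<and> b = b'"
    using fab_eq_on_MM_imp_eq by (metis restrict_apply' prod.inject)
qed

theorem mainTheorem16:
  fixes d r :: nat
  assumes "2 \<le> d" and "2 \<le> r"
  shows "(\<forall>i<r. bij_betw (phi i) (MM d r) (chart d r i))
    \<and> (\<forall>i. Suc i < r \<longrightarrow> (\<forall>x\<in>MM d r. mu i (phi i x) = phi (Suc i) x))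
    \<and> (\<forall>x\<in>MM d r. \<forall>i<r. (i, phi i x) \<in> Phi d r x \<and> chartmap i (Phi d r x) = phi i x)
    \<and> bij_betw (Phi d r) (MM d r) (PL d r)
    \<and> bij_betw (\<lambda>(a, b). restrict (fab a b) (MM d r)) (T d r) (pull d r ` Sp d r)
    \<and> (\<forall>i<r. bij_betw (\<lambda>(a, b). restrict (fab a b) (MM d r)) (T_i d r i) (pull d r ` Sp_chart d r i))
    \<and> full d r"
proof -
  interpret polyptych_Mdr d r
    using assms by unfold_locales simp_all
  have charts: "\<forall>i<r. bij_betw (phi i) (MM d r) (chart d r i)"
    using bij_betw_phi d_pos by blast
  have mutation: "\<forall>i. Suc i < r \<longrightarrow> (\<forall>x\<in>MM d r. mu i (phi i x) = phi (Suc i) x)"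
    using mu_phi d_pos by blast
  have representatives: "\<forall>x\<in>MM d r. \<forall>i<r. (i, phi i x) \<in> Phi d r x \<and> chartmap i (Phi d r x) = phi i x"
    by (simp add: Phi_eq chartmap_elem) (auto simp: elem_def)
  have "bij_betw elem (MM d r) (PL d r)"
    using inj_on_elem PL_eq by (simp add: bij_betw_def)
  then have elements: "bij_betw (Phi d r) (MM d r) (PL d r)"
    using bij_betw_cong[of "MM d r" "Phi d r" elem] Phi_eq by blast
  have points: "bij_betw (\<lambda>(a, b). restrict (fab a b) (MM d r)) (T d r) (pull d r ` Sp d r)"
    using inj_on_fab_T[OF two_le_d] image_pull_Sp by (simp add: bij_betw_def)
  have chart_points:
    "\<forall>i<r. bij_betw (\<lambda>(a, b). restrict (fab a b) (MM d r)) (T_i d r i) (pull d r ` Sp_chart d r i)"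
    using inj_on_subset[OF inj_on_fab_T[OF two_le_d] T_i_subset_T] image_pull_Sp_chart
    by (simp add: bij_betw_def)
  show ?thesis
    using charts mutation representatives elements points chart_points full by (intro conjI)
qed

end
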